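(* Let $L\ge2$ and let $S=(d,N_1,\dots,N_{L-1},1)$ be a neural network architecture. Let $\Omega\subset\mathbb{R}^d$ be compact and let $\varrho:\mathbb{R}\to\mathbb{R}$ be continuous but not a polynomial, and assume there is $x_0\in\mathbb{R}$ such that $\varrho$ is differentiable at $x_0$ with $\varrho'(x_0)\ne0$. If the closure $\overline{\mathcal{RNN}_\varrho^\Omega(S)}$ in $C(\Omega)$ (supremum norm) is convex, then $\mathcal{RNN}_\varrho^\Omega(S)$ is dense in $C(\Omega)$.
   Context: A neural network with architecture $S=(N_0,\dots,N_L)$ ($N_0=d$) is a family $\Phi=((A_\ell,b_\ell))_{\ell=1}^L$, $A_\ell\in\mathbb{R}^{N_\ell\times N_{\ell-1}}$, $b_\ell\in\mathbb{R}^{N_\ell}$; $\mathcal{NN}(S)$ is the set of these. $\mathrm{R}_\varrho^\Omega(\Phi):\Omega\to\mathbb{R}^{N_L}$, $x\mapsto x_L$, where $x_0=x$, $x_\ell=\varrho(A_\ell x_{\ell-1}+b_\ell)$ for $1\le\ell\le L-1$ (componentwise), $x_L=A_Lx_{L-1}+b_L$; $\mathcal{RNN}_\varrho^\Omega(S)=\{\mathrm{R}_\varrho^\Omega(\Phi):\Phi\in\mathcal{NN}(S)\}$. *)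

theory Defs
  imports "HOL-Analysis.Analysis" "HOL-Computational_Algebra.Polynomial"
begin

definition nn_layer :: "(real \<Rightarrow> real) \<Rightarrow> nat \<Rightarrow> nat \<Rightarrow> (nat \<Rightarrow> nat \<Rightarrow> real) \<Rightarrow> (nat \<Rightarrow> real)
    \<Rightarrow> (nat \<Rightarrow> real) \<Rightarrow> (nat \<Rightarrow> real)" where
  "nn_layer \<rho> Nin Nout A b v = (\<lambda>i. if i < Nout then \<rho> ((\<Sum>j<Nin. A i j * v j) + b i) else 0)"

fun nn_hidden :: "(real \<Rightarrow> real) \<Rightarrow> nat \<Rightarrow> nat list \<Rightarrow> ((nat \<Rightarrow> nat \<Rightarrow> real) \<times> (nat \<Rightarrow> real)) list
    \<Rightarrow> (nat \<Rightarrow> real) \<Rightarrow> (nat \<Rightarrow> real)" where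
  "nn_hidden \<rho> n [] ps v = v"
| "nn_hidden \<rho> n (m # ms) [] v = v"
| "nn_hidden \<rho> n (m # ms) ((A, b) # ps) v = nn_hidden \<rho> m ms ps (nn_layer \<rho> n m A b v)"

text \<open>Realization of a network of architecture (d, N_1, ..., N_{L-1}, 1), where
  Ns = [N_1, ..., N_{L-1}] and d = CARD('d). Parameters: first layer rows A1 i (i < N_1)
  and bias b1; the middle layers ps (one pair per layer 2..L-1); output row c, output bias e.\<close>
definition nn_realize :: "(real \<Rightarrow> real) \<Rightarrow> nat list \<Rightarrow> (nat \<Rightarrow> real^'d) \<Rightarrow> (nat \<Rightarrow> real)
    \<Rightarrow> ((nat \<Rightarrow> nat \<Rightarrow> real) \<times> (nat \<Rightarrow> real)) list \<Rightarrow> (nat \<Rightarrow> real) \<Rightarrow> real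
    \<Rightarrow> real^'d \<Rightarrow> real" where
  "nn_realize \<rho> Ns A1 b1 ps c e x =
     (let v1 = (\<lambda>i. if i < hd Ns then \<rho> (A1 i \<bullet> x + b1 i) else 0);
          h = nn_hidden \<rho> (hd Ns) (tl Ns) ps v1
      in (\<Sum>j<last Ns. c j * h j) + e)"

text \<open>The set RNN of realizations, for the architecture (CARD('d), Ns, 1) (Ns nonempty).
  Functions are compared only on \<Omega> below, so their values outside \<Omega> are irrelevant.\<close>
definition RNN :: "(real \<Rightarrow> real) \<Rightarrow> nat list \<Rightarrow> (real^'d \<Rightarrow> real) set" where
  "RNN \<rho> Ns = {nn_realize \<rho> Ns A1 b1 ps c e | A1 b1 ps c e. length ps = length Ns - 1}"

definition unif_closure_on :: "'a::topological_space set \<Rightarrow> ('a \<Rightarrow> real) set \<Rightarrow> ('a \<Rightarrow> real) set" where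
  "unif_closure_on \<Omega> F = {f. continuous_on \<Omega> f \<and>
       (\<forall>\<epsilon>>0. \<exists>g\<in>F. \<forall>x\<in>\<Omega>. \<bar>f x - g x\<bar> \<le> \<epsilon>)}"

definition convex_fun_set :: "('a \<Rightarrow> real) set \<Rightarrow> bool" where
  "convex_fun_set C = (\<forall>f\<in>C. \<forall>g\<in>C. \<forall>t::real. 0 \<le> t \<and> t \<le> 1 \<longrightarrow>
        (\<lambda>x. t * f x + (1 - t) * g x) \<in> C)"

definition dense_in_C :: "'a::topological_space set \<Rightarrow> ('a \<Rightarrow> real) set \<Rightarrow> bool" where
  "dense_in_C \<Omega> F = (\<forall>f. continuous_on \<Omega> f \<longrightarrow>
       (\<forall>\<epsilon>>0. \<exists>g\<in>F. \<forall>x\<in>\<Omega>. \<bar>f x - g x\<bar> \<le> \<epsilon>))"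

end

theory Submission
  imports Defs
begin

(*
  Let C be the closure of the network class. Scaling the output layer shows that C is a cone,
  so convexity makes it closed under addition. Near x0 the rescaled activation
  u \<mapsto> (\<rho>(x0 + h u) - \<rho>(x0)) / (h \<rho>'(x0)) is uniformly close to the identity, so the
  hidden layers can pass a single neuron \<rho>(a \<bullet> x + b) to the output almost unchanged: C contains
  every ridge function \<rho>(a \<bullet> x + b), hence every f(a \<bullet> x) with f in the locally uniform closure of
  span{\<rho>(w t + b)}. For a continuous non-polynomial \<rho> this closure contains all monomials, by the
  argument of Leshno, Lin, Pinkus and Schocken: after smoothing \<rho> by n window means of width h,
  differentiating n times in w and setting w = 0 leaves t^n times the n-th finite difference of \<rho>
  with step h at b, and these cannot all vanish unless \<rho> is a polynomial. Hence exp is in the closure, C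
  contains all exponential sums x \<mapsto> \<Sum> c_i exp(a_i \<bullet> x), and these are dense by Stone-Weierstrass.
*)

lemma abs_diff_le_add:
  fixes a b c :: real
  shows "\<bar>a - b\<bar> \<le> d1 \<Longrightarrow> \<bar>b - c\<bar> \<le> d2 \<Longrightarrow> \<bar>a - c\<bar> \<le> d1 + d2"
  by (simp add: abs_le_iff)

lemma continuous_on_UNIV_uniform_modulus:
  fixes f :: "real \<Rightarrow> real"
  assumes "continuous_on UNIV f" "e > 0"
  obtains d where "d > 0" "\<And>x y. x \<in> {a..b} \<Longrightarrow> y \<in> {a..b} \<Longrightarrow> \<bar>x - y\<bar> < d \<Longrightarrow> \<bar>f x - f y\<bar> < e"
proof -
  have "uniformly_continuous_on {a..b} f"
    by (rule compact_uniformly_continuous) (use assms continuous_on_subset in auto)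
  then show ?thesis
    using that assms(2) unfolding uniformly_continuous_on_def dist_real_def by metis
qed

lemma MVT_abs:
  fixes G G' :: "real \<Rightarrow> real"
  assumes "\<And>x. (G has_real_derivative G' x) (at x)"
  obtains z where "\<bar>z - x\<bar> \<le> \<bar>y - x\<bar>" "G y - G x = (y - x) * G' z"
proof (cases x y rule: linorder_cases)
  case less
  then show thesis using MVT2[of x y G G'] assms that by force
next
  case equal
  then show thesis using that by auto
next
  case greater
  then obtain z where "y < z" "z < x" "G x - G y = (x - y) * G' z"
    using MVT2[of y x G G'] assms by blast
  then show thesis using that[of z] by (auto simp: algebra_simps)
qed

section \<open>Ridge functions of one variable\<close>

definition ridge_sum :: "(real \<Rightarrow> real) \<Rightarrow> (real \<times> real \<times> real) list \<Rightarrow> real \<Rightarrow> real" where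
  "ridge_sum \<rho> L t = (\<Sum>(c, w, b)\<leftarrow>L. c * \<rho> (w * t + b))"

definition ridge_closure :: "(real \<Rightarrow> real) \<Rightarrow> (real \<Rightarrow> real) set" where
  "ridge_closure \<rho> = {f. \<forall>R>0. \<forall>e>0. \<exists>L. \<forall>t. \<bar>t\<bar> \<le> R \<longrightarrow> \<bar>f t - ridge_sum \<rho> L t\<bar> \<le> e}"

lemma ridge_closureD:
  assumes "f \<in> ridge_closure \<rho>" "R > 0" "e > 0"
  obtains L where "\<And>t. \<bar>t\<bar> \<le> R \<Longrightarrow> \<bar>f t - ridge_sum \<rho> L t\<bar> \<le> e"
  using assms unfolding ridge_closure_def by blast

lemma ridge_closure_closed:
  assumes "\<And>R e. R > 0 \<Longrightarrow> e > 0 \<Longrightarrow> \<exists>g\<in>ridge_closure \<rho>. \<forall>t. \<bar>t\<bar> \<le> R \<longrightarrow> \<bar>f t - g t\<bar> \<le> e"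
  shows "f \<in> ridge_closure \<rho>"
  unfolding ridge_closure_def
proof (intro CollectI allI impI)
  fix R e :: real assume "R > 0" "e > 0"
  then obtain g where g: "g \<in> ridge_closure \<rho>" "\<forall>t. \<bar>t\<bar> \<le> R \<longrightarrow> \<bar>f t - g t\<bar> \<le> e / 2"
    using assms[of R "e / 2"] by auto
  obtain L where "\<And>t. \<bar>t\<bar> \<le> R \<Longrightarrow> \<bar>g t - ridge_sum \<rho> L t\<bar> \<le> e / 2"
    using ridge_closureD[OF g(1) \<open>R > 0\<close>, of "e / 2"] \<open>e > 0\<close> by auto
  with g(2) have "\<bar>f t - ridge_sum \<rho> L t\<bar> \<le> e" if "\<bar>t\<bar> \<le> R" for t
    using abs_diff_le_add[of "f t" "g t" "e / 2" "ridge_sum \<rho> L t" "e / 2"] that by simp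
  then show "\<exists>L. \<forall>t. \<bar>t\<bar> \<le> R \<longrightarrow> \<bar>f t - ridge_sum \<rho> L t\<bar> \<le> e" by blast
qed

lemma ridge_sum_in_ridge_closure: "ridge_sum \<rho> L \<in> ridge_closure \<rho>"
  unfolding ridge_closure_def by (auto intro!: exI[of _ L])

lemma ridge_closure_self: "\<rho> \<in> ridge_closure \<rho>"
proof -
  have "ridge_sum \<rho> [(1, 1, 0)] = \<rho>" by (simp add: ridge_sum_def fun_eq_iff)
  then show ?thesis using ridge_sum_in_ridge_closure[of \<rho> "[(1, 1, 0)]"] by simp
qed

lemma ridge_closure_zero: "(\<lambda>t. 0) \<in> ridge_closure \<rho>"
proof -
  have "ridge_sum \<rho> [] = (\<lambda>t. 0)" by (simp add: ridge_sum_def fun_eq_iff)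
  then show ?thesis using ridge_sum_in_ridge_closure[of \<rho> "[]"] by simp
qed

lemma ridge_closure_add:
  assumes "f \<in> ridge_closure \<rho>" "g \<in> ridge_closure \<rho>"
  shows "(\<lambda>t. f t + g t) \<in> ridge_closure \<rho>"
  unfolding ridge_closure_def
proof (intro CollectI allI impI)
  fix R e :: real assume "R > 0" "e > 0"
  then have "e / 2 > 0" by simp
  obtain L1 where L1: "\<And>t. \<bar>t\<bar> \<le> R \<Longrightarrow> \<bar>f t - ridge_sum \<rho> L1 t\<bar> \<le> e / 2"
    using ridge_closureD[OF assms(1) \<open>R > 0\<close> \<open>e / 2 > 0\<close>] by blast
  obtain L2 where L2: "\<And>t. \<bar>t\<bar> \<le> R \<Longrightarrow> \<bar>g t - ridge_sum \<rho> L2 t\<bar> \<le> e / 2"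
    using ridge_closureD[OF assms(2) \<open>R > 0\<close> \<open>e / 2 > 0\<close>] by blast
  have "\<bar>f t + g t - ridge_sum \<rho> (L1 @ L2) t\<bar> \<le> e" if "\<bar>t\<bar> \<le> R" for t
    using L1[OF that] L2[OF that] abs_diff_triangle_ineq[of "f t" "g t" "ridge_sum \<rho> L1 t" "ridge_sum \<rho> L2 t"]
    by (simp add: ridge_sum_def)
  then show "\<exists>L. \<forall>t. \<bar>t\<bar> \<le> R \<longrightarrow> \<bar>f t + g t - ridge_sum \<rho> L t\<bar> \<le> e" by blast
qed

lemma ridge_closure_cmult:
  assumes "f \<in> ridge_closure \<rho>"
  shows "(\<lambda>t. a * f t) \<in> ridge_closure \<rho>"
  unfolding ridge_closure_def
proof (intro CollectI allI impI)
  fix R e :: real assume "R > 0" "e > 0"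
  moreover have "e / (\<bar>a\<bar> + 1) > 0" using \<open>e > 0\<close> by simp
  ultimately obtain L where L: "\<And>t. \<bar>t\<bar> \<le> R \<Longrightarrow> \<bar>f t - ridge_sum \<rho> L t\<bar> \<le> e / (\<bar>a\<bar> + 1)"
    using ridge_closureD[OF assms] by blast
  have scale: "ridge_sum \<rho> (map (\<lambda>(c, y). (a * c, y)) L) t = a * ridge_sum \<rho> L t" for t
    by (induction L) (auto simp: ridge_sum_def algebra_simps)
  have "\<bar>a * f t - a * ridge_sum \<rho> L t\<bar> \<le> e" if "\<bar>t\<bar> \<le> R" for t
  proof -
    have "\<bar>a * f t - a * ridge_sum \<rho> L t\<bar> = \<bar>a\<bar> * \<bar>f t - ridge_sum \<rho> L t\<bar>"
      by (simp add: abs_mult[symmetric] right_diff_distrib)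
    also have "\<dots> \<le> (\<bar>a\<bar> + 1) * (e / (\<bar>a\<bar> + 1))"
      using L[OF that] by (intro mult_mono) auto
    finally show ?thesis by simp
  qed
  then show "\<exists>L. \<forall>t. \<bar>t\<bar> \<le> R \<longrightarrow> \<bar>a * f t - ridge_sum \<rho> L t\<bar> \<le> e"
    unfolding scale[symmetric] by blast
qed

lemma ridge_closure_diff:
  assumes "f \<in> ridge_closure \<rho>" "g \<in> ridge_closure \<rho>"
  shows "(\<lambda>t. f t - g t) \<in> ridge_closure \<rho>"
  using ridge_closure_add[OF assms(1) ridge_closure_cmult[OF assms(2), of "-1"]] by simp

lemma ridge_closure_sum:
  fixes n :: nat
  assumes "\<And>i. i < n \<Longrightarrow> f i \<in> ridge_closure \<rho>"
  shows "(\<lambda>t. \<Sum>i<n. f i t) \<in> ridge_closure \<rho>"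
  using assms by (induction n) (auto intro: ridge_closure_zero ridge_closure_add)

lemma ridge_closure_compose_affine:
  assumes "f \<in> ridge_closure \<rho>"
  shows "(\<lambda>t. f (p * t + q)) \<in> ridge_closure \<rho>"
  unfolding ridge_closure_def
proof (intro CollectI allI impI)
  fix R e :: real assume "R > 0" "e > 0"
  define R' where "R' = \<bar>p\<bar> * R + \<bar>q\<bar> + 1"
  have "R' > 0" unfolding R'_def using \<open>R > 0\<close> by (simp add: add_nonneg_pos)
  then obtain L where L: "\<And>t. \<bar>t\<bar> \<le> R' \<Longrightarrow> \<bar>f t - ridge_sum \<rho> L t\<bar> \<le> e"
    using ridge_closureD[OF assms _ \<open>e > 0\<close>] by blast
  have shift: "ridge_sum \<rho> (map (\<lambda>(c, w, b). (c, w * p, w * q + b)) L) t = ridge_sum \<rho> L (p * t + q)" for t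
    by (induction L) (auto simp: ridge_sum_def algebra_simps)
  have "\<bar>f (p * t + q) - ridge_sum \<rho> L (p * t + q)\<bar> \<le> e" if "\<bar>t\<bar> \<le> R" for t
  proof (rule L)
    have "\<bar>p * t\<bar> \<le> \<bar>p\<bar> * R" using that by (simp add: abs_mult mult_left_mono)
    then show "\<bar>p * t + q\<bar> \<le> R'" unfolding R'_def by linarith
  qed
  then show "\<exists>L. \<forall>t. \<bar>t\<bar> \<le> R \<longrightarrow> \<bar>f (p * t + q) - ridge_sum \<rho> L t\<bar> \<le> e"
    unfolding shift[symmetric] by blast
qed

lemma ridge_closure_translate:
  assumes "f \<in> ridge_closure \<rho>"
  shows "(\<lambda>t. f (t + q)) \<in> ridge_closure \<rho>"
  using ridge_closure_compose_affine[OF assms, of 1 q] by simp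

section \<open>Window means and finite differences\<close>

definition antideriv :: "(real \<Rightarrow> real) \<Rightarrow> real \<Rightarrow> real" where
  "antideriv f x = integral {0..x} f - integral {x..0} f"

lemma antideriv_has_real_derivative:
  assumes "continuous_on UNIV f"
  shows "(antideriv f has_real_derivative f x) (at x)"
proof -
  define a where "a = -(\<bar>x\<bar> + 1)"
  define b where "b = \<bar>x\<bar> + 1"
  have ab: "a < x" "x < b" "a < 0" "0 < b" unfolding a_def b_def by auto
  have cont: "continuous_on {a..b} f" using continuous_on_subset assms by blast
  have int: "f integrable_on {a..b}" by (rule integrable_continuous_real) fact
  have eq: "integral {a..y} f - integral {a..0} f = antideriv f y" if "y \<in> {a<..<b}" for y
  proof (cases "0 \<le> y")
    case True
    have "integral {a..0} f + integral {0..y} f = integral {a..y} f"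
      by (rule Henstock_Kurzweil_Integration.integral_combine) (use True that ab in \<open>auto intro: integrable_on_subinterval[OF int]\<close>)
    moreover have "integral {y..0} f = 0" using True by (cases "y = 0") auto
    ultimately show ?thesis by (simp add: antideriv_def)
  next
    case False
    have "integral {a..y} f + integral {y..0} f = integral {a..0} f"
      by (rule Henstock_Kurzweil_Integration.integral_combine) (use False that ab in \<open>auto intro: integrable_on_subinterval[OF int]\<close>)
    moreover have "integral {0..y} f = 0" using False by simp
    ultimately show ?thesis by (simp add: antideriv_def)
  qed
  have "((\<lambda>y. integral {a..y} f) has_real_derivative f x) (at x within {a..b})"
    by (rule integral_has_real_derivative) (use cont ab in auto)
  then have "((\<lambda>y. integral {a..y} f) has_real_derivative f x) (at x)"
    using at_within_interior[of x "{a..b}"] ab by simp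
  then have "((\<lambda>y. integral {a..y} f - integral {a..0} f) has_real_derivative f x) (at x)"
    using DERIV_diff[OF _ DERIV_const] by fastforce
  then show ?thesis
    by (rule has_field_derivative_transform_within_open[of _ _ _ "{a<..<b}"]) (use eq ab in auto)
qed

definition window_mean :: "real \<Rightarrow> (real \<Rightarrow> real) \<Rightarrow> real \<Rightarrow> real" where
  "window_mean h f t = (antideriv f (t + h) - antideriv f t) / h"

definition fin_diff :: "real \<Rightarrow> (real \<Rightarrow> real) \<Rightarrow> real \<Rightarrow> real" where
  "fin_diff h f t = (f (t + h) - f t) / h"

lemma window_mean_diff_mvt:
  assumes "continuous_on UNIV f" "continuous_on UNIV g" "h > 0"
  obtains z where "t < z" "z < t + h" "window_mean h f t - window_mean h g t = f z - g z"
proof -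
  have "((\<lambda>x. antideriv f x - antideriv g x) has_real_derivative f x - g x) (at x)" for x
    using antideriv_has_real_derivative[OF assms(1)] antideriv_has_real_derivative[OF assms(2)]
    by (intro DERIV_diff)
  then obtain z where z: "t < z" "z < t + h"
    "(antideriv f (t + h) - antideriv g (t + h)) - (antideriv f t - antideriv g t) = (t + h - t) * (f z - g z)"
    using MVT2[of t "t + h" "\<lambda>x. antideriv f x - antideriv g x" "\<lambda>x. f x - g x"] assms(3) by auto
  moreover have "window_mean h f t - window_mean h g t =
      ((antideriv f (t + h) - antideriv g (t + h)) - (antideriv f t - antideriv g t)) / h"
    unfolding window_mean_def by (simp add: diff_divide_distrib)
  ultimately show thesis using that assms(3) by simp
qed

lemma window_mean_mvt:
  assumes "continuous_on UNIV f" "h > 0"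
  obtains z where "t < z" "z < t + h" "window_mean h f t = f z"
proof -
  obtain z where "t < z" "z < t + h" "window_mean h f t - window_mean h (\<lambda>_. 0) t = f z - 0"
    using window_mean_diff_mvt[OF assms(1) continuous_on_const[of UNIV 0] assms(2)] by blast
  moreover have "window_mean h (\<lambda>_. 0) t = 0" by (simp add: window_mean_def antideriv_def)
  ultimately show thesis using that by simp
qed

lemma window_mean_has_real_derivative:
  assumes "continuous_on UNIV f" "h \<noteq> 0"
  shows "(window_mean h f has_real_derivative fin_diff h f x) (at x)"
proof -
  have "((\<lambda>t. antideriv f (t + h)) has_real_derivative f (x + h)) (at x)"
    using antideriv_has_real_derivative[OF assms(1), of "x + h"] DERIV_shift by blast
  then have "((\<lambda>t. (antideriv f (t + h) - antideriv f t) / h) has_real_derivative (f (x + h) - f x) / h) (at x)"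
    by (intro DERIV_cdivide DERIV_diff antideriv_has_real_derivative[OF assms(1)])
  then show ?thesis unfolding window_mean_def[abs_def] fin_diff_def .
qed

lemma continuous_on_window_mean:
  assumes "continuous_on UNIV f" "h \<noteq> 0"
  shows "continuous_on UNIV (window_mean h f)"
  using window_mean_has_real_derivative[OF assms]
  by (intro continuous_at_imp_continuous_on ballI DERIV_isCont) blast

lemma continuous_on_window_mean_pow:
  assumes "continuous_on UNIV f" "h \<noteq> 0"
  shows "continuous_on UNIV ((window_mean h ^^ n) f)"
  using assms by (induction n) (auto intro: continuous_on_window_mean)

lemma fin_diff_has_real_derivative:
  assumes "\<And>x. (f has_real_derivative f' x) (at x)"
  shows "(fin_diff h f has_real_derivative fin_diff h f' x) (at x)"
proof -
  have "((\<lambda>t. f (t + h)) has_real_derivative f' (x + h)) (at x)"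
    using assms[of "x + h"] DERIV_shift by blast
  then have "((\<lambda>t. (f (t + h) - f t) / h) has_real_derivative (f' (x + h) - f' x) / h) (at x)"
    by (intro DERIV_cdivide DERIV_diff assms)
  then show ?thesis unfolding fin_diff_def[abs_def] .
qed

lemma continuous_on_fin_diff_pow:
  assumes "continuous_on UNIV f"
  shows "continuous_on UNIV ((fin_diff h ^^ n) f)"
  using assms
proof (induction n)
  case (Suc n)
  then have "continuous_on UNIV (\<lambda>t. (1 / h) * ((fin_diff h ^^ n) f (t + h) - (fin_diff h ^^ n) f t))"
    by (intro continuous_intros continuous_on_compose2[OF Suc.IH]) auto
  then show ?case by (simp add: fin_diff_def[abs_def])
qed simp

text \<open>For \<open>m \<le> n\<close> this is the \<open>m\<close>-th derivative of the \<open>n\<close>-fold window mean: each window mean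
  turns one derivative into a finite difference.\<close>
definition smoothed_diff :: "real \<Rightarrow> nat \<Rightarrow> (real \<Rightarrow> real) \<Rightarrow> nat \<Rightarrow> real \<Rightarrow> real" where
  "smoothed_diff h n f m = (fin_diff h ^^ m) ((window_mean h ^^ (n - m)) f)"

lemma smoothed_diff_has_real_derivative:
  assumes "continuous_on UNIV f" "h \<noteq> 0" "m < n"
  shows "(smoothed_diff h n f m has_real_derivative smoothed_diff h n f (Suc m) x) (at x)"
proof -
  define g where "g = (window_mean h ^^ (n - Suc m)) f"
  have "(window_mean h ^^ (n - m)) f = window_mean h g"
    unfolding g_def using assms(3) by (metis Suc_diff_Suc comp_apply funpow.simps(2))
  moreover have "(fin_diff h ^^ Suc m) g = (fin_diff h ^^ m) (fin_diff h g)"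
    by (simp add: funpow_Suc_right del: funpow.simps)
  moreover have "((fin_diff h ^^ m) (window_mean h g) has_real_derivative (fin_diff h ^^ m) (fin_diff h g) x) (at x)"
  proof (induction m arbitrary: x)
    case (Suc m)
    then show ?case by (auto intro: fin_diff_has_real_derivative)
  qed (use window_mean_has_real_derivative continuous_on_window_mean_pow assms(1,2) g_def in auto)
  ultimately show ?thesis unfolding smoothed_diff_def g_def by simp
qed

lemma continuous_on_smoothed_diff:
  assumes "continuous_on UNIV f" "h \<noteq> 0"
  shows "continuous_on UNIV (smoothed_diff h n f m)"
  unfolding smoothed_diff_def using assms
  by (intro continuous_on_fin_diff_pow continuous_on_window_mean_pow)

lemma window_mean_riemann_sum:
  fixes n :: nat and h :: real
  assumes cont: "continuous_on UNIV f" and "h > 0" "n > 0"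
    and modulus: "\<And>x y. x \<in> {t..t + h} \<Longrightarrow> y \<in> {t..t + h} \<Longrightarrow> \<bar>x - y\<bar> \<le> h / n \<Longrightarrow> \<bar>f x - f y\<bar> \<le> e"
  shows "\<bar>window_mean h f t - (\<Sum>j<n. f (t + j * h / n) / n)\<bar> \<le> e"
proof -
  define s where "s j = t + j * h / n" for j :: nat
  have "h / n > 0" using assms by simp
  have s_Suc: "s (Suc j) = s j + h / n" for j
    unfolding s_def by (simp add: distrib_right add_divide_distrib)
  have step: "antideriv f (s (Suc j)) - antideriv f (s j) = h / n * window_mean (h / n) f (s j)" for j
    unfolding s_Suc window_mean_def using \<open>h / n > 0\<close> by simp
  have near: "\<bar>window_mean (h / n) f (s j) - f (s j)\<bar> \<le> e" if "j < n" for j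
  proof -
    obtain z where z: "s j < z" "z < s j + h / n" "window_mean (h / n) f (s j) = f z"
      using window_mean_mvt[OF cont \<open>h / n > 0\<close>] by blast
    have "real (Suc j) * h \<le> n * h" using that \<open>h > 0\<close> by (intro mult_right_mono) auto
    then have "s j + h / n \<le> t + h"
      unfolding s_Suc[symmetric] s_def using \<open>n > 0\<close> by (simp add: field_simps)
    moreover have "t \<le> s j" unfolding s_def using \<open>h > 0\<close> by simp
    ultimately show ?thesis
      using modulus[of z "s j"] z \<open>h / n > 0\<close> by simp
  qed
  have "window_mean h f t = (antideriv f (s n) - antideriv f (s 0)) / h"
    unfolding window_mean_def s_def using \<open>n > 0\<close> by simp
  also have "\<dots> = (\<Sum>j<n. antideriv f (s (Suc j)) - antideriv f (s j)) / h"
    using sum_lessThan_telescope[of "\<lambda>j. antideriv f (s j)" n] by simp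
  also have "\<dots> = (\<Sum>j<n. window_mean (h / n) f (s j) / n)"
    unfolding step sum_divide_distrib using \<open>h > 0\<close> by (intro sum.cong) auto
  finally have "\<bar>window_mean h f t - (\<Sum>j<n. f (s j) / n)\<bar> = \<bar>\<Sum>j<n. (window_mean (h / n) f (s j) - f (s j)) / n\<bar>"
    by (simp add: sum_subtractf diff_divide_distrib)
  also have "\<dots> \<le> (\<Sum>j<n. e / n)"
    using near \<open>n > 0\<close> by (intro order.trans[OF sum_abs] sum_mono) (simp add: divide_right_mono)
  also have "\<dots> = e" using \<open>n > 0\<close> by simp
  finally show ?thesis by (simp add: s_def)
qed

lemma ridge_closure_window_mean:
  assumes cont: "continuous_on UNIV f" and "f \<in> ridge_closure \<rho>" "h > 0"
  shows "window_mean h f \<in> ridge_closure \<rho>"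
proof (rule ridge_closure_closed)
  fix R e :: real assume "R > 0" "e > 0"
  then have "e / 2 > 0" by simp
  then obtain d where "d > 0"
    and d: "\<And>x y. x \<in> {-R..R + h} \<Longrightarrow> y \<in> {-R..R + h} \<Longrightarrow> \<bar>x - y\<bar> < d \<Longrightarrow> \<bar>f x - f y\<bar> < e / 2"
    using continuous_on_UNIV_uniform_modulus[OF cont] by metis
  obtain n :: nat where n: "h / d < n" using reals_Archimedean2 by blast
  then have "n > 0" using \<open>h > 0\<close> \<open>d > 0\<close> by (metis divide_pos_pos of_nat_0_less_iff order_less_trans)
  then have "h / n < d" using n \<open>d > 0\<close> by (simp add: field_simps)
  define g where "g t = (\<Sum>j<n. (1 / n) * f (t + j * h / n))" for t
  have "g \<in> ridge_closure \<rho>"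
    unfolding g_def[abs_def] by (intro ridge_closure_sum ridge_closure_cmult ridge_closure_translate assms(2))
  moreover have "\<bar>window_mean h f t - g t\<bar> \<le> e" if "\<bar>t\<bar> \<le> R" for t
  proof -
    have "\<bar>f x - f y\<bar> \<le> e / 2" if "x \<in> {t..t + h}" "y \<in> {t..t + h}" "\<bar>x - y\<bar> \<le> h / n" for x y
    proof -
      have "x \<in> {-R..R + h}" "y \<in> {-R..R + h}" "\<bar>x - y\<bar> < d"
        using that \<open>\<bar>t\<bar> \<le> R\<close> \<open>h / n < d\<close> by (auto simp: abs_le_iff)
      then show ?thesis using d by fastforce
    qed
    then have "\<bar>window_mean h f t - g t\<bar> \<le> e / 2"
      using window_mean_riemann_sum[OF cont \<open>h > 0\<close> \<open>n > 0\<close>, of t "e / 2"] unfolding g_def by simp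
    then show ?thesis using \<open>e > 0\<close> by simp
  qed
  ultimately show "\<exists>g\<in>ridge_closure \<rho>. \<forall>t. \<bar>t\<bar> \<le> R \<longrightarrow> \<bar>window_mean h f t - g t\<bar> \<le> e" by blast
qed

lemma ridge_closure_window_mean_pow:
  assumes "continuous_on UNIV f" "f \<in> ridge_closure \<rho>" "h > 0"
  shows "(window_mean h ^^ n) f \<in> ridge_closure \<rho>"
  using assms
  by (induction n) (auto intro!: ridge_closure_window_mean continuous_on_window_mean_pow)

lemma window_mean_pow_deviation:
  fixes n :: nat and h e t :: real
  assumes cont: "continuous_on UNIV f" and "h > 0"
    and modulus: "\<And>x y. x \<in> {t..t + n * h} \<Longrightarrow> y \<in> {t..t + n * h} \<Longrightarrow> \<bar>x - y\<bar> \<le> h \<Longrightarrow> \<bar>f x - f y\<bar> \<le> e"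
  shows "\<bar>(window_mean h ^^ n) f t - f t\<bar> \<le> n * e"
  using modulus
proof (induction n arbitrary: t)
  case (Suc n)
  have "continuous_on UNIV ((window_mean h ^^ n) f)"
    using continuous_on_window_mean_pow[OF cont] \<open>h > 0\<close> by simp
  then obtain z where z: "t < z" "z < t + h"
    "window_mean h ((window_mean h ^^ n) f) t - window_mean h f t = (window_mean h ^^ n) f z - f z"
    using window_mean_diff_mvt[OF _ cont \<open>h > 0\<close>] by metis
  obtain z' where z': "t < z'" "z' < t + h" "window_mean h f t = f z'"
    using window_mean_mvt[OF cont \<open>h > 0\<close>] by metis
  have "0 \<le> n * h" using \<open>h > 0\<close> by simp
  have "\<bar>(window_mean h ^^ n) f z - f z\<bar> \<le> n * e"
  proof (rule Suc.IH)
    fix x y assume "x \<in> {z..z + n * h}" "y \<in> {z..z + n * h}" "\<bar>x - y\<bar> \<le> h"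
    then show "\<bar>f x - f y\<bar> \<le> e" using z by (intro Suc.prems) (auto simp: algebra_simps)
  qed
  moreover have "Suc n * h = h + n * h" by (simp add: algebra_simps)
  then have "z' \<le> t + Suc n * h" "t \<le> t + Suc n * h" using z' \<open>0 \<le> n * h\<close> by linarith+
  then have "z' \<in> {t..t + Suc n * h}" "t \<in> {t..t + Suc n * h}" "\<bar>z' - t\<bar> \<le> h" using z' by auto
  then have "\<bar>f z' - f t\<bar> \<le> e" by (rule Suc.prems)
  ultimately show ?case using z(3) z'(3) by (simp add: algebra_simps abs_le_iff)
qed simp

lemma window_mean_pow_uniform_approx:
  fixes f :: "real \<Rightarrow> real" and n :: nat
  assumes cont: "continuous_on UNIV f" and "e > 0"
  obtains \<delta> where "\<delta> > 0"
    "\<And>h t. 0 < h \<Longrightarrow> h < \<delta> \<Longrightarrow> t \<in> {a..b} \<Longrightarrow> \<bar>(window_mean h ^^ n) f t - f t\<bar> \<le> e"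
proof -
  define e' where "e' = e / (n + 1)"
  have "e' > 0" unfolding e'_def using \<open>e > 0\<close> by simp
  then obtain d where "d > 0"
    and d: "\<And>x y. x \<in> {a..b + 1} \<Longrightarrow> y \<in> {a..b + 1} \<Longrightarrow> \<bar>x - y\<bar> < d \<Longrightarrow> \<bar>f x - f y\<bar> < e'"
    using continuous_on_UNIV_uniform_modulus[OF cont] by metis
  define \<delta> where "\<delta> = min d (1 / (n + 1))"
  have "\<bar>(window_mean h ^^ n) f t - f t\<bar> \<le> e" if "0 < h" "h < \<delta>" "t \<in> {a..b}" for h t
  proof -
    have "h * (n + 1) < 1" using that unfolding \<delta>_def by (simp add: field_simps)
    then have window: "{t..t + n * h} \<subseteq> {a..b + 1}" using that by (auto simp: algebra_simps)
    have "\<bar>(window_mean h ^^ n) f t - f t\<bar> \<le> n * e'"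
    proof (rule window_mean_pow_deviation[OF cont \<open>0 < h\<close>])
      fix x y assume "x \<in> {t..t + n * h}" "y \<in> {t..t + n * h}" "\<bar>x - y\<bar> \<le> h"
      then show "\<bar>f x - f y\<bar> \<le> e'"
        using d[of x y] window \<open>h < \<delta>\<close> unfolding \<delta>_def by auto
    qed
    also have "\<dots> \<le> e" unfolding e'_def using \<open>e > 0\<close> by (simp add: field_simps)
    finally show ?thesis .
  qed
  moreover have "\<delta> > 0" unfolding \<delta>_def using \<open>d > 0\<close> by simp
  ultimately show thesis using that by blast
qed

section \<open>Polynomials as limits\<close>

definition lagrange_basis :: "'a::field set \<Rightarrow> 'a \<Rightarrow> 'a poly" where
  "lagrange_basis X x = (\<Prod>y\<in>X - {x}. smult (1 / (x - y)) [:- y, 1:])"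

lemma degree_lagrange_basis:
  assumes "finite X"
  shows "degree (lagrange_basis X x) \<le> card (X - {x})"
proof -
  have "degree (lagrange_basis X x) \<le> sum (degree \<circ> (\<lambda>y. smult (1 / (x - y)) [:- y, 1:])) (X - {x})"
    unfolding lagrange_basis_def using assms by (intro degree_prod_sum_le) simp
  also have "\<dots> \<le> (\<Sum>y\<in>X - {x}. 1)"
    by (intro sum_mono) (auto intro: order.trans[OF degree_smult_le])
  finally show ?thesis by simp
qed

lemma poly_lagrange_basis:
  assumes "finite X" "y \<in> X"
  shows "poly (lagrange_basis X x) y = (if y = x then 1 else 0)"
proof (cases "y = x")
  case True
  have "(\<Prod>z\<in>X - {x}. poly (smult (1 / (x - z)) [:- z, 1:]) x) = 1"
    by (rule prod.neutral) (auto simp: diff_divide_distrib[symmetric])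
  then show ?thesis unfolding lagrange_basis_def poly_prod using True by simp
next
  case False
  have "(\<Prod>z\<in>X - {x}. poly (smult (1 / (x - z)) [:- z, 1:]) y) = 0"
    using assms False by (intro prod_zero) auto
  then show ?thesis unfolding lagrange_basis_def poly_prod using False by simp
qed

lemma lagrange_interpolation:
  fixes p :: "'a::field poly"
  assumes "finite X" "degree p < card X"
  shows "poly p t = (\<Sum>x\<in>X. poly p x * poly (lagrange_basis X x) t)"
proof -
  define q where "q = (\<Sum>x\<in>X. smult (poly p x) (lagrange_basis X x))"
  have "p = q"
  proof (rule poly_eqI_degree[of X])
    fix y assume "y \<in> X"
    have "poly q y = (\<Sum>x\<in>X. if y = x then poly p x else 0)"
      unfolding q_def poly_sum by (intro sum.cong) (auto simp: poly_lagrange_basis[OF assms(1) \<open>y \<in> X\<close>])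
    then show "poly p y = poly q y" using \<open>y \<in> X\<close> assms(1) by simp
  next
    have "degree (smult (poly p x) (lagrange_basis X x)) < card X" if "x \<in> X" for x
      using degree_lagrange_basis[OF assms(1), of x] that assms
      by (metis card_Diff1_less degree_smult_le le_less_trans)
    then show "degree q < card X"
      unfolding q_def using assms by (intro degree_sum_less) auto
  qed (use assms in auto)
  then have "poly p t = poly q t" by (rule arg_cong)
  then show ?thesis unfolding q_def poly_sum by (simp add: mult.commute)
qed

lemma polynomial_of_uniform_approx:
  fixes f :: "real \<Rightarrow> real"
  assumes approx: "\<And>R e. e > 0 \<Longrightarrow> \<exists>p. degree p < n \<and> (\<forall>t. \<bar>t\<bar> \<le> R \<longrightarrow> \<bar>f t - poly p t\<bar> \<le> e)"
  shows "\<exists>q. \<forall>t. f t = poly q t"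
proof -
  define X where "X = real ` {..<n}"
  have "finite X" "card X = n" unfolding X_def by (auto simp: card_image)
  \<comment> \<open>The interpolant of \<open>f\<close> at \<open>0, \<dots>, n - 1\<close> is within a fixed multiple of \<open>e\<close> of every
    \<open>e\<close>-approximant, since the latter is its own interpolant.\<close>
  define q where "q = (\<Sum>x\<in>X. smult (f x) (lagrange_basis X x))"
  have "\<bar>f t - poly q t\<bar> \<le> e" if "e > 0" for t e
  proof -
    define K where "K = (\<Sum>x\<in>X. \<bar>poly (lagrange_basis X x) t\<bar>)"
    have "K \<ge> 0" unfolding K_def by (intro sum_nonneg) auto
    then obtain p where "degree p < n"
      and p: "\<And>s. \<bar>s\<bar> \<le> \<bar>t\<bar> + n \<Longrightarrow> \<bar>f s - poly p s\<bar> \<le> e / (1 + K)"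
      using approx[of "e / (1 + K)" "\<bar>t\<bar> + n"] \<open>e > 0\<close> by auto
    have nodes: "\<bar>poly p x - f x\<bar> \<le> e / (1 + K)" if "x \<in> X" for x
      using p[of x] that unfolding X_def by (auto simp: abs_minus_commute)
    have "f t - poly q t = (f t - poly p t) + (\<Sum>x\<in>X. (poly p x - f x) * poly (lagrange_basis X x) t)"
      using lagrange_interpolation[OF \<open>finite X\<close>, of p t] \<open>degree p < n\<close> \<open>card X = n\<close>
      unfolding q_def poly_sum by (simp add: left_diff_distrib sum_subtractf)
    also have "\<bar>\<dots>\<bar> \<le> e / (1 + K) + (\<Sum>x\<in>X. e / (1 + K) * \<bar>poly (lagrange_basis X x) t\<bar>)"
    proof (intro order.trans[OF abs_triangle_ineq] add_mono order.trans[OF sum_abs] sum_mono)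
      show "\<bar>f t - poly p t\<bar> \<le> e / (1 + K)" using p[of t] by simp
      show "\<bar>(poly p x - f x) * poly (lagrange_basis X x) t\<bar> \<le> e / (1 + K) * \<bar>poly (lagrange_basis X x) t\<bar>"
        if "x \<in> X" for x
        unfolding abs_mult by (rule mult_right_mono[OF nodes[OF that] abs_ge_zero])
    qed
    also have "\<dots> = e / (1 + K) * (1 + K)"
      unfolding K_def sum_distrib_left[symmetric] by (simp only: distrib_left mult_1_right)
    also have "\<dots> = e" using \<open>K \<ge> 0\<close> by simp
    finally show ?thesis .
  qed
  then have "f t = poly q t" for t
    by (metis abs_le_zero_iff eq_iff_diff_eq_0 field_le_epsilon add_0)
  then show ?thesis by blast
qed

lemma window_mean_pow_polynomial:
  assumes cont: "continuous_on UNIV f" and "h > 0" "n > 0"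
    and vanish: "\<And>b. (fin_diff h ^^ n) f b = 0"
  obtains p where "degree p < n" "\<And>t. (window_mean h ^^ n) f t = poly p t"
proof -
  define G where "G m = (if m \<le> n then smoothed_diff h n f m else (\<lambda>_. 0))" for m
  have G_top: "G m = (\<lambda>_. 0)" if "m \<ge> n" for m
    using that vanish unfolding G_def smoothed_diff_def by (auto simp: fun_eq_iff)
  have "DERIV (G m) x :> G (Suc m) x" for m x
  proof (cases "m < n")
    case True
    then show ?thesis
      unfolding G_def using smoothed_diff_has_real_derivative[OF cont _ True] \<open>h > 0\<close> by simp
  next
    case False
    then show ?thesis using G_top[of m] G_top[of "Suc m"] by simp
  qed
  moreover have "G 0 = (window_mean h ^^ n) f" unfolding G_def smoothed_diff_def by simp
  ultimately have "(window_mean h ^^ n) f t = (\<Sum>m<n. (G m 0 / fact m) * t ^ m)" for t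
    using Maclaurin_all_le[of G "(window_mean h ^^ n) f" t n] G_top[of n] by auto
  moreover have "degree (\<Sum>m<n. monom (G m 0 / fact m) m) < n"
    using \<open>n > 0\<close> by (intro degree_sum_less) (auto intro: le_less_trans[OF degree_monom_le])
  ultimately show thesis using that by (simp add: poly_sum poly_monom)
qed

lemma polynomial_of_fin_diff_vanish:
  assumes cont: "continuous_on UNIV f" and "n > 0"
    and vanish: "\<And>h b. h > 0 \<Longrightarrow> (fin_diff h ^^ n) f b = 0"
  shows "\<exists>p. \<forall>t. f t = poly p t"
proof (rule polynomial_of_uniform_approx)
  fix R e :: real assume "e > 0"
  then obtain \<delta> where "\<delta> > 0"
    and \<delta>: "\<And>h t. 0 < h \<Longrightarrow> h < \<delta> \<Longrightarrow> t \<in> {-R..R} \<Longrightarrow> \<bar>(window_mean h ^^ n) f t - f t\<bar> \<le> e"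
    using window_mean_pow_uniform_approx[OF cont] by metis
  then have "\<delta> / 2 > 0" "\<delta> / 2 < \<delta>" by auto
  then obtain p where "degree p < n" "\<And>t. (window_mean (\<delta> / 2) ^^ n) f t = poly p t"
    using window_mean_pow_polynomial[OF cont _ \<open>n > 0\<close> vanish] by metis
  then show "\<exists>p. degree p < n \<and> (\<forall>t. \<bar>t\<bar> \<le> R \<longrightarrow> \<bar>f t - poly p t\<bar> \<le> e)"
    using \<delta>[OF \<open>\<delta> / 2 > 0\<close> \<open>\<delta> / 2 < \<delta>\<close>] by (auto simp: abs_minus_commute abs_le_iff)
qed

section \<open>Monomials and the exponential as ridge limits\<close>

lemma ridge_closure_weight_derivative:
  fixes G G' :: "real \<Rightarrow> real"
  assumes V: "\<And>w b. (\<lambda>t. t ^ m * G (w * t + b)) \<in> ridge_closure \<rho>"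
    and G': "\<And>x. (G has_real_derivative G' x) (at x)" and cont: "continuous_on UNIV G'"
  shows "(\<lambda>t. t ^ Suc m * G' (w * t + b)) \<in> ridge_closure \<rho>"
proof (rule ridge_closure_closed)
  fix R e :: real assume "R > 0" "e > 0"
  define M where "M = \<bar>w\<bar> * R + \<bar>b\<bar> + R"
  define e' where "e' = e / (R ^ Suc m + 1)"
  have "R ^ Suc m > 0" using \<open>R > 0\<close> by simp
  then have "e' > 0" unfolding e'_def using \<open>e > 0\<close> by simp
  then obtain d where "d > 0"
    and d: "\<And>x y. x \<in> {-M..M} \<Longrightarrow> y \<in> {-M..M} \<Longrightarrow> \<bar>x - y\<bar> < d \<Longrightarrow> \<bar>G' x - G' y\<bar> < e'"
    using continuous_on_UNIV_uniform_modulus[OF cont] by metis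
  define s where "s = min 1 (d / (2 * R))"
  have "s > 0" "s \<le> 1" unfolding s_def using \<open>d > 0\<close> \<open>R > 0\<close> by auto
  have "s * R \<le> d / (2 * R) * R" unfolding s_def using \<open>R > 0\<close> by (intro mult_right_mono) auto
  then have "s * R < d" using \<open>R > 0\<close> \<open>d > 0\<close> by simp
  define q where "q t = (1 / s) * (t ^ m * G ((w + s) * t + b) - t ^ m * G (w * t + b))" for t
  have "q \<in> ridge_closure \<rho>"
    unfolding q_def[abs_def] by (intro ridge_closure_cmult ridge_closure_diff V)
  moreover have "\<bar>t ^ Suc m * G' (w * t + b) - q t\<bar> \<le> e" if "\<bar>t\<bar> \<le> R" for t
  proof -
    obtain z where z: "\<bar>z - (w * t + b)\<bar> \<le> \<bar>s * t\<bar>" "G ((w + s) * t + b) - G (w * t + b) = s * t * G' z"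
      using MVT_abs[OF G', of "w * t + b" "(w + s) * t + b"] by (auto simp: algebra_simps)
    have "q t = t ^ Suc m * G' z"
      unfolding q_def using z(2) \<open>s > 0\<close> by (simp add: right_diff_distrib[symmetric] field_simps)
    have "\<bar>s * t\<bar> \<le> s * R" using that \<open>s > 0\<close> by (simp add: abs_mult mult_left_mono)
    moreover have "\<bar>w * t\<bar> \<le> \<bar>w\<bar> * R" using that by (simp add: abs_mult mult_left_mono)
    moreover have "s * R \<le> R" using \<open>s \<le> 1\<close> \<open>R > 0\<close> by simp
    ultimately have "w * t + b \<in> {-M..M}" "z \<in> {-M..M}" "\<bar>w * t + b - z\<bar> < d"
      using z(1) \<open>s * R < d\<close> unfolding M_def by (auto simp: abs_le_iff)
    then have "\<bar>G' (w * t + b) - G' z\<bar> \<le> e'" using d by fastforce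
    moreover have "\<bar>t\<bar> ^ Suc m \<le> R ^ Suc m" using that by (intro power_mono) auto
    ultimately have "\<bar>t\<bar> ^ Suc m * \<bar>G' (w * t + b) - G' z\<bar> \<le> R ^ Suc m * e'"
      using \<open>R ^ Suc m > 0\<close> by (intro mult_mono) auto
    also have "\<dots> \<le> e" unfolding e'_def using \<open>R ^ Suc m > 0\<close> \<open>e > 0\<close> by (simp add: field_simps)
    finally show ?thesis
      unfolding \<open>q t = t ^ Suc m * G' z\<close> by (simp add: abs_mult power_abs right_diff_distrib[symmetric])
  qed
  ultimately show "\<exists>g\<in>ridge_closure \<rho>. \<forall>t. \<bar>t\<bar> \<le> R \<longrightarrow> \<bar>t ^ Suc m * G' (w * t + b) - g t\<bar> \<le> e"
    by blast
qed

lemma ridge_closure_monomial_of_fin_diff: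
  assumes cont: "continuous_on UNIV \<rho>" and "h > 0" and nonzero: "(fin_diff h ^^ n) \<rho> b \<noteq> 0"
  shows "(\<lambda>t. t ^ n) \<in> ridge_closure \<rho>"
proof -
  have "(\<lambda>t. t ^ m * smoothed_diff h n \<rho> m (w * t + b)) \<in> ridge_closure \<rho>" if "m \<le> n" for m w b
    using that
  proof (induction m arbitrary: w b)
    case 0
    have "(window_mean h ^^ n) \<rho> \<in> ridge_closure \<rho>"
      by (rule ridge_closure_window_mean_pow[OF cont ridge_closure_self \<open>h > 0\<close>])
    then show ?case unfolding smoothed_diff_def by (auto intro: ridge_closure_compose_affine)
  next
    case (Suc m)
    then show ?case
      using \<open>h > 0\<close>
      by (intro ridge_closure_weight_derivative[OF Suc.IH] smoothed_diff_has_real_derivative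
          continuous_on_smoothed_diff cont) auto
  qed
  from this[of n 0 b] have "(\<lambda>t. (fin_diff h ^^ n) \<rho> b * t ^ n) \<in> ridge_closure \<rho>"
    unfolding smoothed_diff_def by (simp add: mult.commute)
  from ridge_closure_cmult[OF this, of "1 / (fin_diff h ^^ n) \<rho> b"] show ?thesis
    using nonzero by simp
qed

lemma ridge_closure_monomial:
  assumes cont: "continuous_on UNIV \<rho>" and nonpoly: "\<not> (\<exists>p. \<forall>t. \<rho> t = poly p t)"
  shows "(\<lambda>t. t ^ n) \<in> ridge_closure \<rho>"
proof -
  have pos: "(\<lambda>t. t ^ k) \<in> ridge_closure \<rho>" if "k > 0" for k
  proof -
    obtain h b where "h > 0" "(fin_diff h ^^ k) \<rho> b \<noteq> 0"
      using polynomial_of_fin_diff_vanish[OF cont \<open>k > 0\<close>] nonpoly by blast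
    then show ?thesis by (rule ridge_closure_monomial_of_fin_diff[OF cont])
  qed
  have "(\<lambda>t. (t + 1) ^ 1 - t ^ 1) \<in> ridge_closure \<rho>"
    using pos[of 1] by (intro ridge_closure_diff ridge_closure_translate) auto
  then have "(\<lambda>t. 1) \<in> ridge_closure \<rho>" by simp
  with pos show ?thesis by (cases "n = 0") auto
qed

lemma ridge_closure_exp:
  assumes "continuous_on UNIV \<rho>" "\<not> (\<exists>p. \<forall>t. \<rho> t = poly p t)"
  shows "exp \<in> ridge_closure \<rho>"
proof (rule ridge_closure_closed)
  fix R e :: real assume "R > 0" "e > 0"
  have "(\<lambda>n. inverse (fact n) * R ^ n) \<longlonglongrightarrow> 0"
    by (rule summable_LIMSEQ_zero[OF summable_exp])
  then obtain N where N: "inverse (fact N) * R ^ N < e / exp R"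
    using LIMSEQ_D[of _ 0 "e / exp R"] \<open>R > 0\<close> \<open>e > 0\<close> by force
  define g where "g t = (\<Sum>m<N. (1 / fact m) * t ^ m)" for t :: real
  have "g \<in> ridge_closure \<rho>" unfolding g_def[abs_def]
    by (intro ridge_closure_sum ridge_closure_cmult ridge_closure_monomial assms)
  moreover have "\<bar>exp t - g t\<bar> \<le> e" if "\<bar>t\<bar> \<le> R" for t
  proof -
    obtain s where s: "\<bar>s\<bar> \<le> \<bar>t\<bar>" "exp t = (\<Sum>m<N. t ^ m / fact m) + exp s / fact N * t ^ N"
      using Maclaurin_exp_le by blast
    then have "exp t - g t = exp s / fact N * t ^ N" unfolding g_def by simp
    then have "\<bar>exp t - g t\<bar> = exp s * (inverse (fact N) * \<bar>t\<bar> ^ N)"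
      by (simp add: abs_mult power_abs divide_inverse)
    also have "\<dots> \<le> exp R * (inverse (fact N) * R ^ N)"
      using s(1) that by (intro mult_mono mult_left_mono power_mono) auto
    also have "\<dots> \<le> e" using N by (simp add: field_simps)
    finally show ?thesis .
  qed
  ultimately show "\<exists>g\<in>ridge_closure \<rho>. \<forall>t. \<bar>t\<bar> \<le> R \<longrightarrow> \<bar>exp t - g t\<bar> \<le> e" by blast
qed

section \<open>Exponential sums\<close>

definition exp_comb :: "(real \<times> 'a::real_inner) list \<Rightarrow> 'a \<Rightarrow> real" where
  "exp_comb L x = (\<Sum>(c, a)\<leftarrow>L. c * exp (a \<bullet> x))"

lemma exp_comb_Nil: "exp_comb [] = (\<lambda>x. 0)"
  by (simp add: exp_comb_def fun_eq_iff)

lemma exp_comb_Cons: "exp_comb ((c, a) # L) = (\<lambda>x. c * exp (a \<bullet> x) + exp_comb L x)"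
  by (simp add: exp_comb_def fun_eq_iff)

lemma exp_comb_append: "exp_comb (L1 @ L2) x = exp_comb L1 x + exp_comb L2 x"
  by (simp add: exp_comb_def)

lemma exp_comb_mult:
  "exp_comb (concat (map (\<lambda>(c1, a1). map (\<lambda>(c2, a2). (c1 * c2, a1 + a2)) L2) L1)) x = exp_comb L1 x * exp_comb L2 x"
proof (induction L1)
  case (Cons p L1)
  obtain c1 a1 where p: "p = (c1, a1)" by (cases p)
  have "exp_comb (map (\<lambda>(c2, a2). (c1 * c2, a1 + a2)) L2) x = c1 * exp (a1 \<bullet> x) * exp_comb L2 x"
    by (induction L2) (auto simp: exp_comb_def exp_add inner_add_left algebra_simps)
  then show ?case using Cons.IH by (simp add: p exp_comb_append exp_comb_Cons algebra_simps)
qed (simp add: exp_comb_def)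

lemma continuous_on_exp_comb: "continuous_on S (exp_comb L)"
proof (induction L)
  case (Cons p L)
  then show ?case by (cases p) (auto simp: exp_comb_Cons intro!: continuous_intros)
qed (simp add: exp_comb_Nil)

lemma exp_comb_uniform_approx:
  fixes f :: "'a::real_inner \<Rightarrow> real"
  assumes "compact S" "continuous_on S f" "e > 0"
  obtains L where "\<forall>x\<in>S. \<bar>f x - exp_comb L x\<bar> < e"
proof -
  have "\<exists>g. (\<exists>L. g = exp_comb L) \<and> (\<forall>x\<in>S. \<bar>f x - g x\<bar> < e)"
  proof (rule Stone_Weierstrass_HOL[OF assms(1)])
    fix c :: real
    show "\<exists>L. (\<lambda>x. c) = exp_comb L"
      by (rule exI[of _ "[(c, 0)]"]) (simp add: exp_comb_def fun_eq_iff)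
  next
    fix g h :: "'a \<Rightarrow> real" assume "(\<exists>L. g = exp_comb L) \<and> (\<exists>L. h = exp_comb L)"
    then obtain L1 L2 where "g = exp_comb L1" "h = exp_comb L2" by blast
    then show "\<exists>L. (\<lambda>x. g x + h x) = exp_comb L"
      using exp_comb_append[of L1 L2] by (intro exI[of _ "L1 @ L2"]) (simp add: fun_eq_iff)
    show "\<exists>L. (\<lambda>x. g x * h x) = exp_comb L"
      using exp_comb_mult[of L2 L1] \<open>g = exp_comb L1\<close> \<open>h = exp_comb L2\<close>
      by (intro exI[of _ "concat (map (\<lambda>(c1, a1). map (\<lambda>(c2, a2). (c1 * c2, a1 + a2)) L2) L1)"])
        (simp add: fun_eq_iff)
  next
    fix x y :: 'a assume "x \<in> S \<and> y \<in> S \<and> x \<noteq> y"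
    moreover have "(x - y) \<bullet> x - (x - y) \<bullet> y = (x - y) \<bullet> (x - y)" by (simp add: inner_diff_right)
    ultimately have "(x - y) \<bullet> x \<noteq> (x - y) \<bullet> y" by auto
    then show "\<exists>g. (\<exists>L. g = exp_comb L) \<and> g x \<noteq> g y"
      by (intro exI[of _ "exp_comb [(1, x - y)]"]) (auto simp: exp_comb_def)
  qed (use assms continuous_on_exp_comb in auto)
  then show thesis using that by blast
qed

section \<open>Uniform closures of network classes\<close>

lemma dense_in_C_iff: "dense_in_C \<Omega> F \<longleftrightarrow> (\<forall>f. continuous_on \<Omega> f \<longrightarrow> f \<in> unif_closure_on \<Omega> F)"
  unfolding dense_in_C_def unif_closure_on_def by blast

lemma unif_closure_on_closed:
  assumes "continuous_on \<Omega> f"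
    and "\<And>e. e > 0 \<Longrightarrow> \<exists>g\<in>unif_closure_on \<Omega> F. \<forall>x\<in>\<Omega>. \<bar>f x - g x\<bar> \<le> e"
  shows "f \<in> unif_closure_on \<Omega> F"
  unfolding unif_closure_on_def
proof (intro CollectI conjI assms(1) allI impI)
  fix e :: real assume "e > 0"
  then have "e / 2 > 0" by simp
  then obtain g where g: "g \<in> unif_closure_on \<Omega> F" "\<forall>x\<in>\<Omega>. \<bar>f x - g x\<bar> \<le> e / 2"
    using assms(2) by blast
  then obtain k where "k \<in> F" "\<forall>x\<in>\<Omega>. \<bar>g x - k x\<bar> \<le> e / 2"
    using \<open>e / 2 > 0\<close> unfolding unif_closure_on_def by blast
  moreover have "\<bar>f x - k x\<bar> \<le> e" if "\<bar>f x - g x\<bar> \<le> e / 2" "\<bar>g x - k x\<bar> \<le> e / 2" for x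
    using abs_diff_le_add[OF that] by simp
  ultimately show "\<exists>k\<in>F. \<forall>x\<in>\<Omega>. \<bar>f x - k x\<bar> \<le> e" using g(2) by blast
qed

lemma unif_closure_on_zero:
  assumes "(\<lambda>x. 0) \<in> F"
  shows "(\<lambda>x. 0) \<in> unif_closure_on \<Omega> F"
  unfolding unif_closure_on_def
  by (intro CollectI conjI continuous_on_const allI impI bexI[OF _ assms]) simp

lemma unif_closure_on_cmult:
  assumes "\<And>g. g \<in> F \<Longrightarrow> (\<lambda>x. a * g x) \<in> F" and "f \<in> unif_closure_on \<Omega> F"
  shows "(\<lambda>x. a * f x) \<in> unif_closure_on \<Omega> F"
  unfolding unif_closure_on_def
proof (intro CollectI conjI allI impI)
  show "continuous_on \<Omega> (\<lambda>x. a * f x)"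
    using assms(2) unfolding unif_closure_on_def by (simp add: continuous_on_mult_left)
  fix e :: real assume "e > 0"
  then have "e / (\<bar>a\<bar> + 1) > 0" by simp
  then obtain g where "g \<in> F" and g: "\<forall>x\<in>\<Omega>. \<bar>f x - g x\<bar> \<le> e / (\<bar>a\<bar> + 1)"
    using assms(2) unfolding unif_closure_on_def by blast
  have close: "\<bar>a * f x - a * g x\<bar> \<le> e" if "x \<in> \<Omega>" for x
  proof -
    have "\<bar>a * f x - a * g x\<bar> = \<bar>a\<bar> * \<bar>f x - g x\<bar>" by (simp add: abs_mult[symmetric] right_diff_distrib)
    also have "\<dots> \<le> (\<bar>a\<bar> + 1) * (e / (\<bar>a\<bar> + 1))" using g that by (intro mult_mono) auto
    also have "\<dots> = e" by simp
    finally show ?thesis .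
  qed
  show "\<exists>g\<in>F. \<forall>x\<in>\<Omega>. \<bar>a * f x - g x\<bar> \<le> e"
    by (intro bexI[OF _ assms(1)[OF \<open>g \<in> F\<close>]] ballI close)
qed

lemma unif_closure_on_add:
  assumes cone: "\<And>a g. g \<in> F \<Longrightarrow> (\<lambda>x. a * g x) \<in> F"
    and convex: "convex_fun_set (unif_closure_on \<Omega> F)"
    and "f \<in> unif_closure_on \<Omega> F" "g \<in> unif_closure_on \<Omega> F"
  shows "(\<lambda>x. f x + g x) \<in> unif_closure_on \<Omega> F"
proof -
  have "(\<lambda>x. 1 / 2 * f x + (1 - 1 / 2) * g x) \<in> unif_closure_on \<Omega> F"
    using convex[unfolded convex_fun_set_def, rule_format, OF assms(3,4), of "1 / 2"] by simp
  from unif_closure_on_cmult[OF cone this, of 2] show ?thesis by (simp add: algebra_simps)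
qed

lemma RNN_cmult:
  assumes "g \<in> RNN \<rho> Ns"
  shows "(\<lambda>x. a * g x) \<in> RNN \<rho> Ns"
proof -
  obtain A1 b1 ps c e where g: "g = nn_realize \<rho> Ns A1 b1 ps c e" "length ps = length Ns - 1"
    using assms unfolding RNN_def by blast
  have "(\<lambda>x. a * g x) = nn_realize \<rho> Ns A1 b1 ps (\<lambda>j. a * c j) (a * e)"
    unfolding g(1) nn_realize_def Let_def
    by (simp add: fun_eq_iff sum_distrib_left distrib_left mult.assoc)
  then show ?thesis using g(2) unfolding RNN_def by blast
qed

lemma RNN_zero: "(\<lambda>x. 0) \<in> RNN \<rho> Ns"
proof -
  have "nn_realize \<rho> Ns (\<lambda>_. 0) (\<lambda>_. 0) (replicate (length Ns - 1) (\<lambda>_ _. 0, \<lambda>_. 0)) (\<lambda>_. 0) 0 \<in> RNN \<rho> Ns"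
    unfolding RNN_def
    by (rule CollectI, rule exI[of _ "\<lambda>_. 0"], rule exI[of _ "\<lambda>_. 0"],
        rule exI[of _ "replicate (length Ns - 1) (\<lambda>_ _. 0, \<lambda>_. 0)"], rule exI[of _ "\<lambda>_. 0"], rule exI[of _ 0])
      simp
  from RNN_cmult[OF this, of 0] show ?thesis by simp
qed

lemma sum_lessThan_if_zero:
  fixes v :: "nat \<Rightarrow> 'a::semiring_0"
  assumes "n > 0"
  shows "(\<Sum>j<n. (if j = 0 then a else 0) * v j) = a * v 0"
proof -
  have "(\<Sum>j<n. (if j = 0 then a else 0) * v j) = (\<Sum>j<n. if j = 0 then a * v 0 else 0)"
    by (rule sum.cong) auto
  then show ?thesis using assms by simp
qed

lemma nn_layer_first_coord:
  assumes "n > 0" "m > 0"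
  shows "nn_layer \<rho> n m (\<lambda>i j. if j = 0 then w else 0) (\<lambda>i. b) v 0 = \<rho> (w * v 0 + b)"
  using assms by (simp add: nn_layer_def sum_lessThan_if_zero)

lemma rescaled_activation_approx_identity:
  fixes \<rho> :: "real \<Rightarrow> real"
  assumes "(\<rho> has_real_derivative D) (at x0)" "D \<noteq> 0" "e > 0"
  obtains h where "h \<noteq> 0" "\<And>u. \<bar>u\<bar> \<le> M \<Longrightarrow> \<bar>(\<rho> (h * u + x0) - \<rho> x0) / (h * D) - u\<bar> \<le> e"
proof -
  define M' where "M' = \<bar>M\<bar> + 1"
  have "M' > 0" unfolding M'_def by simp
  have "(\<lambda>y. (\<rho> (x0 + y) - \<rho> x0) / y) \<midarrow>0\<rightarrow> D" using assms(1) by (simp add: DERIV_def)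
  moreover have "e * \<bar>D\<bar> / M' > 0" using assms(2,3) \<open>M' > 0\<close> by simp
  ultimately obtain s where "s > 0"
    and s: "\<forall>y. y \<noteq> 0 \<and> norm (y - 0) < s \<longrightarrow> norm ((\<rho> (x0 + y) - \<rho> x0) / y - D) < e * \<bar>D\<bar> / M'"
    using LIM_D by blast
  define h where "h = s / M'"
  have "h > 0" unfolding h_def using \<open>s > 0\<close> \<open>M' > 0\<close> by simp
  have "\<bar>(\<rho> (h * u + x0) - \<rho> x0) / (h * D) - u\<bar> \<le> e" if "\<bar>u\<bar> \<le> M" for u
  proof (cases "u = 0")
    case False
    have "\<bar>u\<bar> < M'" using that unfolding M'_def by linarith
    then have "\<bar>h * u\<bar> < s"
      using \<open>s > 0\<close> \<open>M' > 0\<close> unfolding h_def by (simp add: abs_mult field_simps)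
    then have q: "\<bar>(\<rho> (x0 + h * u) - \<rho> x0) / (h * u) - D\<bar> < e * \<bar>D\<bar> / M'"
      using s False \<open>h > 0\<close> by auto
    have "(\<rho> (h * u + x0) - \<rho> x0) / (h * D) - u = u / D * ((\<rho> (x0 + h * u) - \<rho> x0) / (h * u) - D)"
      using \<open>h > 0\<close> False assms(2) by (simp add: field_simps)
    then have "\<bar>(\<rho> (h * u + x0) - \<rho> x0) / (h * D) - u\<bar> = \<bar>u\<bar> / \<bar>D\<bar> * \<bar>(\<rho> (x0 + h * u) - \<rho> x0) / (h * u) - D\<bar>"
      by (simp add: abs_mult abs_divide)
    also have "\<dots> \<le> M' / \<bar>D\<bar> * (e * \<bar>D\<bar> / M')"
      using that q unfolding M'_def by (intro mult_mono divide_right_mono) auto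
    also have "\<dots> = e" using assms(2) \<open>M' > 0\<close> by simp
    finally show ?thesis .
  qed (use assms(3) in simp)
  with \<open>h > 0\<close> show thesis using that[of h] by simp
qed

lemma nn_hidden_approx_identity:
  fixes \<rho> :: "real \<Rightarrow> real"
  assumes deriv: "(\<rho> has_real_derivative D) (at x0)" and "D \<noteq> 0" and cont: "continuous_on UNIV \<rho>"
    and "\<forall>m\<in>set ms. m \<ge> 1" "n \<ge> 1" "e > 0"
  shows "\<exists>ps \<alpha> \<beta>. length ps = length ms \<and>
           (\<forall>v. \<bar>v 0\<bar> \<le> M \<longrightarrow> \<bar>\<alpha> * nn_hidden \<rho> n ms ps v 0 + \<beta> - v 0\<bar> \<le> e)"
  using assms(4-6)
proof (induction ms arbitrary: n M e)
  case Nil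
  then show ?case by (intro exI[of _ "[]"] exI[of _ 1] exI[of _ 0]) auto
next
  case (Cons m ms)
  have "e / 2 > 0" using Cons.prems by simp
  then obtain h where "h \<noteq> 0" and h: "\<And>u. \<bar>u\<bar> \<le> M \<Longrightarrow> \<bar>(\<rho> (h * u + x0) - \<rho> x0) / (h * D) - u\<bar> \<le> e / 2"
    using rescaled_activation_approx_identity[OF deriv \<open>D \<noteq> 0\<close>] by metis
  have "bounded (\<rho> ` cball x0 (\<bar>h\<bar> * \<bar>M\<bar>))"
    using cont by (intro compact_imp_bounded compact_continuous_image) (auto intro: continuous_on_subset)
  then obtain B where B: "\<forall>y\<in>cball x0 (\<bar>h\<bar> * \<bar>M\<bar>). \<bar>\<rho> y\<bar> \<le> B" by (auto simp: bounded_iff)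
  have "\<bar>h * D\<bar> > 0" using \<open>h \<noteq> 0\<close> \<open>D \<noteq> 0\<close> by simp
  \<comment> \<open>The error of the deeper layers is divided by \<open>h D\<close> when this layer is undone.\<close>
  then obtain ps \<alpha> \<beta> where "length ps = length ms"
    and IH: "\<And>v. \<bar>v 0\<bar> \<le> B \<Longrightarrow> \<bar>\<alpha> * nn_hidden \<rho> m ms ps v 0 + \<beta> - v 0\<bar> \<le> e / 2 * \<bar>h * D\<bar>"
    using Cons.IH[of m "e / 2 * \<bar>h * D\<bar>" B] Cons.prems by auto
  define A :: "nat \<Rightarrow> nat \<Rightarrow> real" where "A = (\<lambda>i j. if j = 0 then h else 0)"
  define layer where "layer = nn_layer \<rho> n m A (\<lambda>i. x0)"
  have step: "\<bar>\<alpha> / (h * D) * nn_hidden \<rho> n (m # ms) ((A, \<lambda>i. x0) # ps) v 0 + (\<beta> - \<rho> x0) / (h * D) - v 0\<bar> \<le> e"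
    if "\<bar>v 0\<bar> \<le> M" for v
  proof -
    let ?w = "nn_hidden \<rho> m ms ps (layer v) 0"
    have layer: "layer v 0 = \<rho> (h * v 0 + x0)"
      unfolding layer_def A_def using Cons.prems by (intro nn_layer_first_coord) auto
    have "\<bar>h * v 0\<bar> \<le> \<bar>h\<bar> * \<bar>M\<bar>" unfolding abs_mult using that by (intro mult_left_mono) auto
    then have "\<bar>layer v 0\<bar> \<le> B" unfolding layer using B by (simp add: dist_real_def)
    then have next_layer: "\<bar>(\<alpha> * ?w + \<beta> - layer v 0) / (h * D)\<bar> \<le> e / 2"
      using IH[of "layer v"] \<open>\<bar>h * D\<bar> > 0\<close> by (simp add: abs_divide pos_divide_le_eq)
    have this_layer: "\<bar>(layer v 0 - \<rho> x0) / (h * D) - v 0\<bar> \<le> e / 2"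
      unfolding layer using h that by simp
    have split: "\<alpha> / (h * D) * ?w + (\<beta> - \<rho> x0) / (h * D) - v 0
        = (\<alpha> * ?w + \<beta> - layer v 0) / (h * D) + ((layer v 0 - \<rho> x0) / (h * D) - v 0)"
      using \<open>h \<noteq> 0\<close> \<open>D \<noteq> 0\<close> by (simp add: field_simps)
    have "\<bar>\<alpha> / (h * D) * ?w + (\<beta> - \<rho> x0) / (h * D) - v 0\<bar> \<le> e"
      unfolding split using add_mono[OF next_layer this_layer]
      by (intro order.trans[OF abs_triangle_ineq]) simp
    moreover have "nn_hidden \<rho> n (m # ms) ((A, \<lambda>i. x0) # ps) v = nn_hidden \<rho> m ms ps (layer v)"
      unfolding layer_def by simp
    ultimately show ?thesis by simp
  qed
  show ?case
  proof (rule exI[of _ "(A, \<lambda>i. x0) # ps"], rule exI[of _ "\<alpha> / (h * D)"],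
      rule exI[of _ "(\<beta> - \<rho> x0) / (h * D)"], intro conjI allI impI)
    show "length ((A, \<lambda>i. x0) # ps) = length (m # ms)" using \<open>length ps = length ms\<close> by simp
  qed (rule step)
qed

context
  fixes \<rho> :: "real \<Rightarrow> real" and Ns :: "nat list" and \<Omega> :: "(real^'d) set" and x0 D :: real
  assumes widths: "length Ns \<ge> 1" "\<forall>N\<in>set Ns. N \<ge> 1" and "compact \<Omega>"
    and cont: "continuous_on UNIV \<rho>" and deriv: "(\<rho> has_real_derivative D) (at x0)" and "D \<noteq> 0"
begin

lemma activation_ridge_in_closure: "(\<lambda>x. \<rho> (a \<bullet> x + b)) \<in> unif_closure_on \<Omega> (RNN \<rho> Ns)"
  unfolding unif_closure_on_def
proof (intro CollectI conjI allI impI)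
  show cf: "continuous_on \<Omega> (\<lambda>x. \<rho> (a \<bullet> x + b))"
    by (intro continuous_on_compose2[OF cont] continuous_intros) auto
  fix e :: real assume "e > 0"
  obtain M where M: "\<And>x. x \<in> \<Omega> \<Longrightarrow> \<bar>\<rho> (a \<bullet> x + b)\<bar> \<le> M"
    using compact_imp_bounded[OF compact_continuous_image[OF cf \<open>compact \<Omega>\<close>]] by (auto simp: bounded_iff)
  obtain N1 ms where Ns: "Ns = N1 # ms" using widths(1) by (cases Ns) auto
  then obtain ps \<alpha> \<beta> where "length ps = length ms"
    and approx: "\<And>v. \<bar>v 0\<bar> \<le> M \<Longrightarrow> \<bar>\<alpha> * nn_hidden \<rho> N1 ms ps v 0 + \<beta> - v 0\<bar> \<le> e"
    using nn_hidden_approx_identity[OF deriv \<open>D \<noteq> 0\<close> cont, of ms N1 e M] widths \<open>e > 0\<close> by auto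
  define g where "g = nn_realize \<rho> Ns (\<lambda>i. a) (\<lambda>i. b) ps (\<lambda>j. if j = 0 then \<alpha> else 0) \<beta>"
  have "g \<in> RNN \<rho> Ns"
    unfolding RNN_def g_def
    by (rule CollectI, rule exI[of _ "\<lambda>i. a"], rule exI[of _ "\<lambda>i. b"], rule exI[of _ ps],
        rule exI[of _ "\<lambda>j. if j = 0 then \<alpha> else 0"], rule exI[of _ \<beta>])
      (use \<open>length ps = length ms\<close> Ns in simp)
  moreover have "\<bar>\<rho> (a \<bullet> x + b) - g x\<bar> \<le> e" if "x \<in> \<Omega>" for x
  proof -
    define v where "v = (\<lambda>i. if i < N1 then \<rho> (a \<bullet> x + b) else 0)"
    have "v 0 = \<rho> (a \<bullet> x + b)" using widths Ns unfolding v_def by simp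
    moreover have "last Ns \<in> set Ns" using Ns by simp
    then have "last Ns > 0" using widths(2) by fastforce
    then have "g x = \<alpha> * nn_hidden \<rho> N1 ms ps v 0 + \<beta>"
      unfolding g_def nn_realize_def Let_def v_def using Ns by (simp add: sum_lessThan_if_zero)
    ultimately show ?thesis using approx[of v] M[OF that] by (simp add: abs_minus_commute)
  qed
  ultimately show "\<exists>g\<in>RNN \<rho> Ns. \<forall>x\<in>\<Omega>. \<bar>\<rho> (a \<bullet> x + b) - g x\<bar> \<le> e" by blast
qed

context
  assumes convex: "convex_fun_set (unif_closure_on \<Omega> (RNN \<rho> Ns))"
begin

lemma ridge_sum_inner_in_closure: "(\<lambda>x. ridge_sum \<rho> L (a \<bullet> x)) \<in> unif_closure_on \<Omega> (RNN \<rho> Ns)"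
proof (induction L)
  case Nil
  show ?case using unif_closure_on_zero[OF RNN_zero] by (simp add: ridge_sum_def)
next
  case (Cons p L)
  obtain c w b where p: "p = (c, w, b)" by (cases p)
  have "(\<lambda>x. ridge_sum \<rho> (p # L) (a \<bullet> x)) = (\<lambda>x. c * \<rho> ((w *\<^sub>R a) \<bullet> x + b) + ridge_sum \<rho> L (a \<bullet> x))"
    by (simp add: ridge_sum_def p fun_eq_iff)
  then show ?case
    by (simp only:) (intro unif_closure_on_add[OF RNN_cmult convex] unif_closure_on_cmult[OF RNN_cmult]
        activation_ridge_in_closure Cons.IH)
qed

lemma ridge_closure_inner_in_closure:
  assumes "f \<in> ridge_closure \<rho>" "continuous_on \<Omega> (\<lambda>x. f (a \<bullet> x))"
  shows "(\<lambda>x. f (a \<bullet> x)) \<in> unif_closure_on \<Omega> (RNN \<rho> Ns)"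
proof (rule unif_closure_on_closed[OF assms(2)])
  fix e :: real assume "e > 0"
  obtain B where B: "\<And>x. x \<in> \<Omega> \<Longrightarrow> norm x \<le> B"
    using compact_imp_bounded[OF \<open>compact \<Omega>\<close>] by (auto simp: bounded_iff)
  define R where "R = norm a * \<bar>B\<bar> + 1"
  have inner_bound: "\<bar>a \<bullet> x\<bar> \<le> R" if "x \<in> \<Omega>" for x
  proof -
    have "\<bar>a \<bullet> x\<bar> \<le> norm a * norm x" by (rule Cauchy_Schwarz_ineq2)
    also have "\<dots> \<le> norm a * \<bar>B\<bar>" using B[OF that] by (intro mult_left_mono) auto
    finally show ?thesis unfolding R_def by simp
  qed
  have "R > 0" unfolding R_def by (simp add: add_nonneg_pos)
  then obtain L where L: "\<And>t. \<bar>t\<bar> \<le> R \<Longrightarrow> \<bar>f t - ridge_sum \<rho> L t\<bar> \<le> e"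
    using ridge_closureD[OF assms(1) _ \<open>e > 0\<close>] by blast
  show "\<exists>g\<in>unif_closure_on \<Omega> (RNN \<rho> Ns). \<forall>x\<in>\<Omega>. \<bar>f (a \<bullet> x) - g x\<bar> \<le> e"
    by (intro bexI[OF _ ridge_sum_inner_in_closure[of L a]] ballI L inner_bound)
qed

lemma exp_comb_in_closure:
  assumes "exp \<in> ridge_closure \<rho>"
  shows "exp_comb L \<in> unif_closure_on \<Omega> (RNN \<rho> Ns)"
proof (induction L)
  case Nil
  show ?case using unif_closure_on_zero[OF RNN_zero] by (simp add: exp_comb_Nil)
next
  case (Cons p L)
  obtain c a where p: "p = (c, a)" by (cases p)
  have "(\<lambda>x. exp (a \<bullet> x)) \<in> unif_closure_on \<Omega> (RNN \<rho> Ns)"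
    by (intro ridge_closure_inner_in_closure assms continuous_intros)
  then show ?case
    unfolding p exp_comb_Cons
    by (intro unif_closure_on_add[OF RNN_cmult convex] unif_closure_on_cmult[OF RNN_cmult] Cons.IH)
qed

end

end

theorem lemmaC9:
  fixes \<rho> :: "real \<Rightarrow> real" and Ns :: "nat list" and \<Omega> :: "(real^'d) set"
    and x0 D :: real
  assumes "length Ns \<ge> 1"
    and "\<forall>N\<in>set Ns. N \<ge> 1"
    and "compact \<Omega>"
    and "continuous_on UNIV \<rho>"
    and "\<not> (\<exists>p :: real poly. \<forall>x. \<rho> x = poly p x)"
    and "(\<rho> has_real_derivative D) (at x0)" and "D \<noteq> 0"
    and "convex_fun_set (unif_closure_on \<Omega> (RNN \<rho> Ns))"
  shows "dense_in_C \<Omega> (RNN \<rho> Ns)"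
proof -
  have exp_combs: "exp_comb L \<in> unif_closure_on \<Omega> (RNN \<rho> Ns)" for L
    using exp_comb_in_closure[OF assms(1-4,6-8) ridge_closure_exp[OF assms(4,5)]] .
  have "f \<in> unif_closure_on \<Omega> (RNN \<rho> Ns)" if f: "continuous_on \<Omega> f" for f
  proof (rule unif_closure_on_closed[OF f])
    fix e :: real assume "e > 0"
    then obtain L where "\<forall>x\<in>\<Omega>. \<bar>f x - exp_comb L x\<bar> < e"
      using exp_comb_uniform_approx[OF assms(3) f] by blast
    then show "\<exists>g\<in>unif_closure_on \<Omega> (RNN \<rho> Ns). \<forall>x\<in>\<Omega>. \<bar>f x - g x\<bar> \<le> e"
      by (intro bexI[OF _ exp_combs[of L]] ballI) (simp add: less_imp_le)
  qed
  then show ?thesis unfolding dense_in_C_iff by blast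
qed

end
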